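(* There is no integer $k$ such that the class of finite $1$-planar graphs has Assouad–Nagata dimension at most $k$.
   Context: A graph is $1$-planar if it can be drawn in the plane with at most one crossing on each edge. Graphs are unweighted metric spaces with the shortest-path distance. For a metric space $(X,d)$, a family $\mathcal U$ of subsets is $D$-bounded if every member has diameter at most $D$, and $r$-disjoint if points in different members are at distance $>r$. A function $D:\mathbb{R}^+\to\mathbb{R}^+$ is an $n$-dimensional control function for $X$ if for every $r>0$ there is a cover $\mathcal U=\mathcal U_1\cup\dots\cup\mathcal U_{n+1}$ of $X$ with each $\mathcal U_i$ $r$-disjoint and each member $D(r)$-bounded. A class has Assouad–Nagata dimension at most $n$ if there is a constant $c>0$ such that $D(r)=cr$ is an $n$-dimensional control function for every member. *)

theory Defs
  imports "HOL-Analysis.Analysis" "HOL-Library.Extended_Real"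
begin

definition finite_graph :: "'a set \<Rightarrow> 'a set set \<Rightarrow> bool" where
  "finite_graph V E \<longleftrightarrow> finite V \<and> (\<forall>e\<in>E. \<exists>u v. e = {u, v} \<and> u \<noteq> v \<and> u \<in> V \<and> v \<in> V)"

text \<open>It is a 1-planar drawing if every edge has at most one crossing,
i.e. there is at most one pair (other edge f, point z) with z an interior point of both.\<close>
definition edge_interior :: "(real \<Rightarrow> complex) \<Rightarrow> complex set" where
  "edge_interior g = path_image g - {pathstart g, pathfinish g}"

definition one_planar_drawing ::
  "'a set \<Rightarrow> 'a set set \<Rightarrow> ('a \<Rightarrow> complex) \<Rightarrow> ('a set \<Rightarrow> real \<Rightarrow> complex) \<Rightarrow> bool" where
  "one_planar_drawing V E pos curve \<longleftrightarrow>
     inj_on pos V \<and>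
     (\<forall>e\<in>E. arc (curve e) \<and> {pathstart (curve e), pathfinish (curve e)} = pos ` e \<and>
              edge_interior (curve e) \<inter> pos ` V = {}) \<and>
     (\<forall>e\<in>E. finite {(f, z). f \<in> E \<and> f \<noteq> e \<and>
                     z \<in> edge_interior (curve e) \<inter> edge_interior (curve f)} \<and>
            card {(f, z). f \<in> E \<and> f \<noteq> e \<and>
                     z \<in> edge_interior (curve e) \<inter> edge_interior (curve f)} \<le> 1)"

definition one_planar :: "'a set \<Rightarrow> 'a set set \<Rightarrow> bool" where
  "one_planar V E \<longleftrightarrow> (\<exists>pos curve. one_planar_drawing V E pos curve)"

text \<open>Shortest-path distance (\<infinity> between different components).\<close>
definition gdist :: "'a set set \<Rightarrow> 'a \<Rightarrow> 'a \<Rightarrow> enat" where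
  "gdist E u v = (INF n \<in> {n. \<exists>w :: nat \<Rightarrow> 'a. w 0 = u \<and> w n = v \<and>
                                  (\<forall>i<n. {w i, w (Suc i)} \<in> E)}. enat n)"

definition gd :: "'a set set \<Rightarrow> 'a \<Rightarrow> 'a \<Rightarrow> ereal" where
  "gd E u v = ereal_of_enat (gdist E u v)"

definition bounded_family :: "'a set set \<Rightarrow> real \<Rightarrow> 'a set set \<Rightarrow> bool" where
  "bounded_family E D \<U> \<longleftrightarrow> (\<forall>U\<in>\<U>. \<forall>x\<in>U. \<forall>y\<in>U. gd E x y \<le> ereal D)"

definition disjoint_family_r :: "'a set set \<Rightarrow> real \<Rightarrow> 'a set set \<Rightarrow> bool" where
  "disjoint_family_r E r \<U> \<longleftrightarrow>
     (\<forall>U\<in>\<U>. \<forall>U'\<in>\<U>. U \<noteq> U' \<longrightarrow> (\<forall>x\<in>U. \<forall>y\<in>U'. gd E x y > ereal r))"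

definition control_function :: "'a set \<Rightarrow> 'a set set \<Rightarrow> int \<Rightarrow> (real \<Rightarrow> real) \<Rightarrow> bool" where
  "control_function V E n D \<longleftrightarrow>
     (\<forall>r>0. \<exists>\<U> :: int \<Rightarrow> 'a set set.
        (\<forall>i\<in>{0..n}. (\<forall>U\<in>\<U> i. U \<subseteq> V) \<and> disjoint_family_r E r (\<U> i)
                     \<and> bounded_family E (D r) (\<U> i)) \<and>
        V \<subseteq> (\<Union>i\<in>{0..n}. \<Union>(\<U> i)))"

definition AN_dim_le :: "('a set \<times> 'a set set) set \<Rightarrow> int \<Rightarrow> bool" where
  "AN_dim_le \<C> n \<longleftrightarrow> (\<exists>c>0. \<forall>(V, E)\<in>\<C>. control_function V E n (\<lambda>r. c * r))"

text \<open>The class of finite 1-planar graphs (every finite graph is isomorphic to one on nat).\<close>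
definition finite_one_planar_graphs :: "(nat set \<times> nat set set) set" where
  "finite_one_planar_graphs = {(V, E). finite_graph V E \<and> one_planar V E}"

end

(* If the finite 1-planar graphs had Assouad-Nagata dimension at most k with constant c, then at
   every scale r each of them would be covered by k + 1 families of r-disjoint, (c r)-bounded sets.
   Double counting over such a cover shows that the graph then contains no finite set R in which
   every (c r)-bounded set A satisfies (k + 2) |A \<inter> R| \<le> |N_{r/2}(A) \<inter> R|.

   The king graph on the grid {0..D+1}^d, with D \<ge> 4 c and d = (k + 1)(D + 1), has this expansion
   for sets of coordinate spread at most D: cutting into lines parallel to an axis gains a factor
   (D + 2)/(D + 1) per coordinate, and by Bernoulli's inequality the d-th power of this factor is
   at least k + 2.

   Every finite graph has a copy, scaled by a large prime \<ell> up to a factor 2, inside a finite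
   1-planar graph: its vertices become horizontal rows \<ell> apart and its edges vertical links
   subdivided into \<ell> edges, each crossing a row edge at most once.  At scale r = 4 \<ell> the copy of
   the king graph yields the contradiction. *)

theory Submission
  imports Defs "HOL-Computational_Algebra.Primes"
begin

section \<open>Walks and the graph metric\<close>

definition walk :: "'a set set \<Rightarrow> 'a \<Rightarrow> 'a \<Rightarrow> nat \<Rightarrow> bool" where
  "walk E u v n \<longleftrightarrow> (\<exists>w :: nat \<Rightarrow> 'a. w 0 = u \<and> w n = v \<and> (\<forall>i<n. {w i, w (Suc i)} \<in> E))"

lemma walk_refl: "walk E u u 0"
  unfolding walk_def by (rule exI[of _ "\<lambda>_. u"]) simp

lemma walk_edge: "{u, v} \<in> E \<Longrightarrow> walk E u v 1"
  unfolding walk_def by (rule exI[of _ "\<lambda>i. if i = 0 then u else v"]) simp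

lemma walk_trans:
  assumes "walk E u v n" "walk E v x m" shows "walk E u x (n + m)"
proof -
  obtain w1 where w1: "w1 0 = u" "w1 n = v" "\<forall>i<n. {w1 i, w1 (Suc i)} \<in> E"
    using assms(1) unfolding walk_def by blast
  obtain w2 where w2: "w2 0 = v" "w2 m = x" "\<forall>i<m. {w2 i, w2 (Suc i)} \<in> E"
    using assms(2) unfolding walk_def by blast
  define w where "w = (\<lambda>i. if i \<le> n then w1 i else w2 (i - n))"
  have "{w i, w (Suc i)} \<in> E" if "i < n + m" for i
  proof (cases "i < n")
    case True then show ?thesis using w1 by (auto simp: w_def)
  next
    case False
    then have "i - n < m" "Suc i - n = Suc (i - n)" using that by auto
    then show ?thesis using w2 False w1(2) by (auto simp: w_def)
  qed
  moreover have "w 0 = u" "w (n + m) = x" using w1 w2 by (auto simp: w_def)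
  ultimately show ?thesis unfolding walk_def by blast
qed

lemma walk_sym:
  assumes "walk E u v n" shows "walk E v u n"
proof -
  obtain w where w: "w 0 = u" "w n = v" "\<forall>i<n. {w i, w (Suc i)} \<in> E"
    using assms unfolding walk_def by blast
  have "{w (n - i), w (n - Suc i)} \<in> E" if "i < n" for i
  proof -
    have "n - i = Suc (n - Suc i)" "n - Suc i < n" using that by auto
    then show ?thesis using w(3) by (metis insert_commute)
  qed
  then show ?thesis unfolding walk_def using w
    by (intro exI[of _ "\<lambda>i. w (n - i)"]) auto
qed

lemma walk_lipschitz:
  fixes \<phi> :: "'a \<Rightarrow> real"
  assumes "walk E u v n" and lip: "\<And>x y. {x, y} \<in> E \<Longrightarrow> \<bar>\<phi> x - \<phi> y\<bar> \<le> \<alpha>"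
  shows "\<bar>\<phi> u - \<phi> v\<bar> \<le> n * \<alpha>"
proof -
  obtain w where w: "w 0 = u" "w n = v" "\<forall>i<n. {w i, w (Suc i)} \<in> E"
    using assms unfolding walk_def by blast
  have "\<bar>\<phi> (w 0) - \<phi> (w j)\<bar> \<le> j * \<alpha>" if "j \<le> n" for j
    using that
  proof (induction j)
    case (Suc j)
    then have "\<bar>\<phi> (w j) - \<phi> (w (Suc j))\<bar> \<le> \<alpha>" using w(3) lip by auto
    with Suc show ?case by (auto simp: algebra_simps)
  qed simp
  then show ?thesis using w by auto
qed

lemma gdist_cases:
  obtains "\<nexists>n. walk E u v n" "gdist E u v = \<infinity>"
  | n where "walk E u v n" "gdist E u v = enat n"
proof (cases "\<exists>n. walk E u v n")
  case False
  then have "gdist E u v = \<infinity>" unfolding gdist_def walk_def by (simp add: Inf_enat_def)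
  with False that(1) show ?thesis by blast
next
  case True
  let ?S = "enat ` {n. walk E u v n}"
  have "gdist E u v = Inf ?S" unfolding gdist_def walk_def by (simp add: image_def)
  moreover have "Inf ?S \<in> ?S"
    using True unfolding Inf_enat_def by (auto intro: LeastI)
  ultimately show ?thesis using that(2) by auto
qed

lemma gd_le_walk: "walk E u v n \<Longrightarrow> gd E u v \<le> ereal n"
proof -
  assume "walk E u v n"
  then have "gdist E u v \<le> enat n" unfolding gdist_def walk_def by (intro INF_lower) auto
  then show ?thesis unfolding gd_def by (metis ereal_of_enat_le_iff ereal_of_enat_simps(1))
qed

lemma gd_ge_if_walks_ge:
  assumes "\<And>n. walk E u v n \<Longrightarrow> y \<le> real n" shows "ereal y \<le> gd E u v"
  using assms by (cases rule: gdist_cases[of E u v]) (auto simp: gd_def)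

lemma gd_nonneg: "0 \<le> gd E u v"
  by (simp add: gd_def)

lemma gd_le_sym: "gd E u v \<le> gd E v u"
proof (cases rule: gdist_cases[of E v u])
  case (2 n)
  then show ?thesis using gd_le_walk[OF walk_sym[OF 2(1)]] by (simp add: gd_def)
qed (simp add: gd_def)

lemma gd_sym: "gd E u v = gd E v u"
  by (rule antisym) (rule gd_le_sym)+

lemma gd_triangle: "gd E u w \<le> gd E u v + gd E v w"
proof (cases rule: gdist_cases[of E u v])
  case 1
  then show ?thesis using gd_nonneg[of E v w] by (simp add: gd_def)
next
  case uv: (2 n)
  show ?thesis
  proof (cases rule: gdist_cases[of E v w])
    case 1
    then show ?thesis using gd_nonneg[of E u v] by (simp add: gd_def)
  next
    case vw: (2 m)
    have "gd E u w \<le> ereal (real (n + m))" by (rule gd_le_walk[OF walk_trans[OF uv(1) vw(1)]])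
    then show ?thesis using uv(2) vw(2) by (simp add: gd_def)
  qed
qed

lemma gd_lower_bound_lipschitz:
  fixes \<phi> :: "'a \<Rightarrow> real"
  assumes lip: "\<And>x y. {x, y} \<in> E \<Longrightarrow> \<bar>\<phi> x - \<phi> y\<bar> \<le> \<alpha>" and "\<alpha> > 0"
  shows "ereal (\<bar>\<phi> u - \<phi> v\<bar> / \<alpha>) \<le> gd E u v"
proof (rule gd_ge_if_walks_ge)
  fix n assume "walk E u v n"
  from walk_lipschitz[OF this lip] show "\<bar>\<phi> u - \<phi> v\<bar> / \<alpha> \<le> real n"
    using \<open>\<alpha> > 0\<close> by (simp add: divide_le_eq)
qed

section \<open>An expansion obstruction to linear control functions\<close>

definition nbhd :: "'a set set \<Rightarrow> 'a set \<Rightarrow> real \<Rightarrow> 'a set \<Rightarrow> 'a set" where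
  "nbhd E V \<rho> A = {v \<in> V. \<exists>a\<in>A. gd E a v \<le> ereal \<rho>}"

lemma nbhd_disjoint:
  assumes "\<And>a b. a \<in> A \<Longrightarrow> b \<in> B \<Longrightarrow> ereal (2 * \<rho>) < gd E a b"
  shows "nbhd E V \<rho> A \<inter> nbhd E V \<rho> B = {}"
proof (rule ccontr)
  assume "nbhd E V \<rho> A \<inter> nbhd E V \<rho> B \<noteq> {}"
  then obtain v a b where "a \<in> A" "gd E a v \<le> ereal \<rho>" "b \<in> B" "gd E b v \<le> ereal \<rho>"
    unfolding nbhd_def by auto
  moreover have "gd E a b \<le> gd E a v + gd E v b" by (rule gd_triangle)
  moreover have "gd E v b = gd E b v" by (rule gd_sym)
  ultimately have "gd E a b \<le> ereal \<rho> + ereal \<rho>"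
    by (metis add_mono order_trans)
  then have "gd E a b \<le> ereal (2 * \<rho>)" by simp
  with assms \<open>a \<in> A\<close> \<open>b \<in> B\<close> show False by (simp add: not_less[symmetric])
qed

lemma sum_card_nbhd_le:
  assumes "finite \<U>" "finite R" "disjoint_family_r E r \<U>"
  shows "(\<Sum>X\<in>\<U>. card (nbhd E V (r / 2) X \<inter> R)) \<le> card R"
proof -
  have "nbhd E V (r / 2) X \<inter> nbhd E V (r / 2) Y = {}" if "X \<in> \<U>" "Y \<in> \<U>" "X \<noteq> Y" for X Y
    using assms(3) that by (intro nbhd_disjoint) (auto simp: disjoint_family_r_def)
  then have "(\<Sum>X\<in>\<U>. card (nbhd E V (r / 2) X \<inter> R)) = card (\<Union>X\<in>\<U>. nbhd E V (r / 2) X \<inter> R)"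
    using assms(1,2) by (subst card_UN_disjoint) auto
  also have "\<dots> \<le> card R" using assms(2) by (intro card_mono) auto
  finally show ?thesis .
qed

text \<open>Double counting over the cover: \<open>|R| \<le> \<Sum> |X \<inter> R|\<close>, while each of the \<open>k + 1\<close> families
  contributes at most \<open>|R|\<close> to \<open>\<Sum> |nbhd X \<inter> R|\<close>.\<close>
lemma not_control_function_if_expanding:
  fixes V :: "'a set" and E :: "'a set set" and R :: "'a set" and c r :: real and k :: int
  assumes "finite V" and "R \<subseteq> V" and "R \<noteq> {}" and "r > 0"
    and expanding: "\<And>A. A \<subseteq> V \<Longrightarrow> (\<forall>x\<in>A. \<forall>y\<in>A. gd E x y \<le> ereal (c * r)) \<Longrightarrow>
      (nat (k + 1) + 1) * card (A \<inter> R) \<le> card (nbhd E V (r / 2) A \<inter> R)"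
  shows "\<not> control_function V E k (\<lambda>r. c * r)"
proof
  assume "control_function V E k (\<lambda>r. c * r)"
  from this[unfolded control_function_def, rule_format, OF \<open>r > 0\<close>]
  obtain \<U> :: "int \<Rightarrow> 'a set set" where
    \<U>: "\<forall>i\<in>{0..k}. (\<forall>X\<in>\<U> i. X \<subseteq> V) \<and> disjoint_family_r E r (\<U> i)
                       \<and> bounded_family E (c * r) (\<U> i)"
    and cover: "V \<subseteq> (\<Union>i\<in>{0..k}. \<Union>(\<U> i))"
    by (elim exE conjE)
  define K where "K = nat (k + 1)"
  have finR: "finite R" using \<open>finite V\<close> \<open>R \<subseteq> V\<close> finite_subset by blast
  have fin\<U>: "finite (\<U> i)" if "i \<in> {0..k}" for i
    using bspec[OF \<U> that] \<open>finite V\<close> by (metis Pow_iff finite_Pow_iff finite_subset subsetI)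
  have "card R \<le> card (\<Union>i\<in>{0..k}. \<Union>X\<in>\<U> i. X \<inter> R)"
    using cover \<open>R \<subseteq> V\<close> finR by (intro card_mono) auto
  also have "\<dots> \<le> (\<Sum>i\<in>{0..k}. card (\<Union>X\<in>\<U> i. X \<inter> R))" by (rule card_UN_le) simp
  also have "\<dots> \<le> (\<Sum>i\<in>{0..k}. \<Sum>X\<in>\<U> i. card (X \<inter> R))"
    by (intro sum_mono card_UN_le fin\<U>)
  finally have covering: "card R \<le> (\<Sum>i\<in>{0..k}. \<Sum>X\<in>\<U> i. card (X \<inter> R))" .
  have packing: "(\<Sum>X\<in>\<U> i. card (nbhd E V (r / 2) X \<inter> R)) \<le> card R" if "i \<in> {0..k}" for i
    using sum_card_nbhd_le[OF fin\<U>[OF that] finR] bspec[OF \<U> that] by blast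
  have "(K + 1) * card R \<le> (K + 1) * (\<Sum>i\<in>{0..k}. \<Sum>X\<in>\<U> i. card (X \<inter> R))"
    using covering by (rule mult_le_mono2)
  also have "\<dots> = (\<Sum>i\<in>{0..k}. \<Sum>X\<in>\<U> i. (K + 1) * card (X \<inter> R))"
    by (simp only: sum_distrib_left)
  also have "\<dots> \<le> (\<Sum>i\<in>{0..k}. \<Sum>X\<in>\<U> i. card (nbhd E V (r / 2) X \<inter> R))"
  proof (intro sum_mono)
    fix i X assume "i \<in> {0..k}" "X \<in> \<U> i"
    then show "(K + 1) * card (X \<inter> R) \<le> card (nbhd E V (r / 2) X \<inter> R)"
      using \<U> unfolding K_def bounded_family_def by (intro expanding) auto
  qed
  also have "\<dots> \<le> (\<Sum>i\<in>{0..k}. card R)" using packing by (rule sum_mono)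
  also have "\<dots> = K * card R" by (simp add: K_def)
  finally have "(K + 1) * card R \<le> K * card R" .
  moreover have "card R > 0" using finR \<open>R \<noteq> {}\<close> by (simp add: card_gt_0_iff)
  ultimately show False by simp
qed

section \<open>Expansion of king-move neighbourhoods in a grid\<close>

definition grid :: "nat \<Rightarrow> nat \<Rightarrow> (nat \<Rightarrow> nat) set" where
  "grid d N = PiE {..<d} (\<lambda>_. {..<N})"

definition line_nbhd :: "nat \<Rightarrow> nat \<Rightarrow> nat \<Rightarrow> (nat \<Rightarrow> nat) set \<Rightarrow> (nat \<Rightarrow> nat) set" where
  "line_nbhd d N i S =
     {y \<in> grid d N. \<exists>x\<in>S. \<bar>int (x i) - int (y i)\<bar> \<le> 1 \<and> (\<forall>j. j \<noteq> i \<longrightarrow> x j = y j)}"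

definition king_nbhd_upto :: "nat \<Rightarrow> nat \<Rightarrow> nat \<Rightarrow> (nat \<Rightarrow> nat) set \<Rightarrow> (nat \<Rightarrow> nat) set" where
  "king_nbhd_upto d N s J =
     {y \<in> grid d N. \<exists>x\<in>J. (\<forall>i<s. \<bar>int (x i) - int (y i)\<bar> \<le> 1) \<and> (\<forall>i\<ge>s. x i = y i)}"

definition king_adj :: "nat \<Rightarrow> (nat \<Rightarrow> nat) \<Rightarrow> (nat \<Rightarrow> nat) \<Rightarrow> bool" where
  "king_adj d x y \<longleftrightarrow> (\<forall>i<d. \<bar>int (x i) - int (y i)\<bar> \<le> 1)"

definition king_nbhd :: "nat \<Rightarrow> nat \<Rightarrow> (nat \<Rightarrow> nat) set \<Rightarrow> (nat \<Rightarrow> nat) set" where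
  "king_nbhd d N J = {y \<in> grid d N. \<exists>x\<in>J. king_adj d x y}"

lemma finite_grid: "finite (grid d N)"
  unfolding grid_def by (rule finite_PiE) auto

lemma grid_coord_less: "x \<in> grid d N \<Longrightarrow> i < d \<Longrightarrow> x i < N"
  unfolding grid_def by (metis PiE_mem lessThan_iff)

lemma grid_upd: "x \<in> grid d N \<Longrightarrow> i < d \<Longrightarrow> v < N \<Longrightarrow> x(i := v) \<in> grid d N"
  unfolding grid_def by (auto simp: PiE_iff extensional_def)

lemma grid_nonempty: "0 < N \<Longrightarrow> grid d N \<noteq> {}"
  unfolding grid_def by (auto simp: PiE_eq_empty_iff)

lemma card_le_if_spread:
  fixes T :: "nat set"
  assumes "finite T" and spread: "\<forall>s\<in>T. \<forall>t\<in>T. \<bar>int s - int t\<bar> \<le> int D"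
  shows "card T \<le> D + 1"
proof (cases "T = {}")
  case False
  have "T \<subseteq> {Min T .. Min T + D}"
    using spread Min_in[OF \<open>finite T\<close> False] \<open>finite T\<close> by fastforce
  then show ?thesis using card_mono[of "{Min T .. Min T + D}" T] by simp
qed simp

text \<open>Take the successor of the maximum or, if the maximum is \<open>N - 1\<close>, the predecessor of the
  minimum.\<close>
lemma exists_neighbour_outside:
  fixes T :: "nat set"
  assumes "finite T" "T \<noteq> {}" "T \<subseteq> {..<N}" "D + 2 \<le> N"
    and spread: "\<forall>s\<in>T. \<forall>t\<in>T. \<bar>int s - int t\<bar> \<le> int D"
  obtains v where "v < N" "v \<notin> T" "\<exists>t\<in>T. \<bar>int t - int v\<bar> \<le> 1"
proof (cases "Max T + 1 < N")
  case True
  have "Max T + 1 \<notin> T" using Max_ge[OF \<open>finite T\<close>] by fastforce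
  then show ?thesis using that True Max_in[OF assms(1,2)] by fastforce
next
  case False
  have "Max T < N" using Max_in[OF assms(1,2)] assms(3) by auto
  then have "1 \<le> Min T"
    using False spread Max_in[OF assms(1,2)] Min_in[OF assms(1,2)] \<open>D + 2 \<le> N\<close> by fastforce
  moreover have "Min T - 1 \<notin> T" using Min_le[OF \<open>finite T\<close>] calculation by fastforce
  moreover have "Min T < N" using Min_in[OF assms(1,2)] assms(3) by auto
  ultimately show ?thesis using that[of "Min T - 1"] Min_in[OF assms(1,2)] by fastforce
qed

lemma line_nbhd_new_point:
  assumes SP: "S \<subseteq> grid d N" and i: "i < d" and N: "D + 2 \<le> N"
    and spread: "\<forall>x\<in>S. \<forall>y\<in>S. \<bar>int (x i) - int (y i)\<bar> \<le> int D" and "x \<in> S"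
  obtains y where "y \<in> line_nbhd d N i S - S" "y(i := 0) = x(i := 0)"
proof -
  let ?line = "{x' \<in> S. x'(i := 0) = x(i := 0)}"
  let ?T = "(\<lambda>x'. x' i) ` ?line"
  have "finite S" using SP finite_grid finite_subset by blast
  then have "finite ?T" by simp
  moreover have "?T \<noteq> {}" "?T \<subseteq> {..<N}" using \<open>x \<in> S\<close> SP grid_coord_less[OF _ i] by auto
  moreover have "\<forall>s\<in>?T. \<forall>t\<in>?T. \<bar>int s - int t\<bar> \<le> int D" using spread by auto
  ultimately obtain v where v: "v < N" "v \<notin> ?T" "\<exists>t\<in>?T. \<bar>int t - int v\<bar> \<le> 1"
    using exists_neighbour_outside N by blast
  then obtain x' where x': "x' \<in> S" "x'(i := 0) = x(i := 0)" "\<bar>int (x' i) - int v\<bar> \<le> 1" by auto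
  show ?thesis
  proof (rule that[of "x'(i := v)"])
    have "x'(i := v) \<notin> S"
      using v(2) x'(2)
      by (metis (mono_tags, lifting) fun_upd_same fun_upd_upd image_eqI mem_Collect_eq)
    moreover have "x'(i := v) \<in> grid d N" using SP x'(1) i v(1) by (intro grid_upd) auto
    ultimately show "x'(i := v) \<in> line_nbhd d N i S - S"
      using x' unfolding line_nbhd_def by auto
    show "(x'(i := v))(i := 0) = x(i := 0)" using x'(2) by simp
  qed
qed

text \<open>Cut \<open>S\<close> into lines parallel to axis \<open>i\<close>: each line holds at most \<open>D + 1\<close> points of \<open>S\<close>,
  and each line that meets \<open>S\<close> contributes a new point to \<open>line_nbhd\<close>.\<close>
lemma card_line_nbhd_ge:
  assumes SP: "S \<subseteq> grid d N" and i: "i < d" and N: "D + 2 \<le> N"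
    and spread: "\<forall>x\<in>S. \<forall>y\<in>S. \<bar>int (x i) - int (y i)\<bar> \<le> int D"
  shows "(D + 2) * card S \<le> (D + 1) * card (line_nbhd d N i S)"
proof -
  define base where "base x = x(i := 0)" for x :: "nat \<Rightarrow> nat"
  define C where "C = base ` S"
  define line where "line k = {x\<in>S. base x = k}" for k
  have finS: "finite S" using SP finite_grid finite_subset by blast
  have finC: "finite C" using finS C_def by simp
  have fin_line: "finite (line k)" for k using finS unfolding line_def by simp
  have inj: "inj_on (\<lambda>x. x i) (line k)" for k
  proof (rule inj_onI)
    fix x y assume "x \<in> line k" "y \<in> line k" "x i = y i"
    then have "x(i := 0) = y(i := 0)" "x i = y i" unfolding line_def base_def by auto
    then show "x = y" by (metis fun_upd_triv fun_upd_upd)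
  qed
  have card_line: "card (line k) \<le> D + 1" for k
    using card_le_if_spread[of "(\<lambda>x. x i) ` line k" D] fin_line spread card_image[OF inj]
    unfolding line_def by auto
  have "S = (\<Union>k\<in>C. line k)" by (auto simp: C_def line_def)
  moreover have "card (\<Union>k\<in>C. line k) = (\<Sum>k\<in>C. card (line k))"
    using finC fin_line by (intro card_UN_disjoint) (auto simp: line_def)
  ultimately have "card S = (\<Sum>k\<in>C. card (line k))" by simp
  also have "\<dots> \<le> (\<Sum>k\<in>C. D + 1)" using card_line by (intro sum_mono)
  also have "\<dots> = (D + 1) * card C" by simp
  finally have few_lines: "card S \<le> (D + 1) * card C" .
  have "\<exists>y. y \<in> line_nbhd d N i S - S \<and> base y = k" if "k \<in> C" for k
    using that line_nbhd_new_point[OF SP i N spread] unfolding C_def base_def by blast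
  then obtain new where new: "\<And>k. k \<in> C \<Longrightarrow> new k \<in> line_nbhd d N i S - S \<and> base (new k) = k"
    by metis
  have "inj_on new C" using new by (metis inj_on_inverseI)
  then have "card S + card C = card S + card (new ` C)" by (simp add: card_image)
  also have "\<dots> = card (S \<union> new ` C)"
    using finS finC new by (intro card_Un_disjoint[symmetric]) auto
  also have "\<dots> \<le> card (line_nbhd d N i S)"
  proof (rule card_mono)
    show "finite (line_nbhd d N i S)"
      by (rule finite_subset[OF _ finite_grid]) (auto simp: line_nbhd_def)
    have "x \<in> line_nbhd d N i S" if "x \<in> S" for x
      using SP that unfolding line_nbhd_def by (intro CollectI conjI bexI[of _ x]) auto
    then show "S \<union> new ` C \<subseteq> line_nbhd d N i S" using new by auto
  qed
  finally have many_new: "card S + card C \<le> card (line_nbhd d N i S)" .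
  have "(D + 2) * card S \<le> (D + 1) * card S + (D + 1) * card C" using few_lines by simp
  also have "\<dots> \<le> (D + 1) * card (line_nbhd d N i S)"
    using many_new by (simp only: distrib_left[symmetric] mult_le_mono2)
  finally show ?thesis .
qed

lemma symp_king_adj: "symp (king_adj d)"
  unfolding king_adj_def by (rule sympI) (simp add: abs_minus_commute)

lemma finite_king_nbhd_upto: "finite (king_nbhd_upto d N s J)"
  by (rule finite_subset[OF _ finite_grid]) (auto simp: king_nbhd_upto_def)

lemma king_nbhd_upto_0: "J \<subseteq> grid d N \<Longrightarrow> king_nbhd_upto d N 0 J = J"
  unfolding king_nbhd_upto_def by (auto simp flip: fun_eq_iff)

lemma line_nbhd_king_nbhd_upto:
  "line_nbhd d N s (king_nbhd_upto d N s J) \<subseteq> king_nbhd_upto d N (Suc s) J"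
proof
  fix y assume "y \<in> line_nbhd d N s (king_nbhd_upto d N s J)"
  then obtain x' where y: "y \<in> grid d N" and x': "x' \<in> king_nbhd_upto d N s J"
    "\<bar>int (x' s) - int (y s)\<bar> \<le> 1" "\<forall>j. j \<noteq> s \<longrightarrow> x' j = y j"
    unfolding line_nbhd_def by auto
  then obtain x where x: "x \<in> J" "\<forall>i<s. \<bar>int (x i) - int (x' i)\<bar> \<le> 1" "\<forall>i\<ge>s. x i = x' i"
    unfolding king_nbhd_upto_def by auto
  have "\<bar>int (x i) - int (y i)\<bar> \<le> 1" if "i < Suc s" for i
    using that x(2,3) x'(2,3) by (cases "i = s") auto
  moreover have "\<forall>i\<ge>Suc s. x i = y i" using x(3) x'(3) by simp
  ultimately show "y \<in> king_nbhd_upto d N (Suc s) J"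
    using y x(1) unfolding king_nbhd_upto_def by blast
qed

lemma king_nbhd_upto_spread:
  assumes "\<forall>x\<in>J. \<forall>y\<in>J. \<bar>int (x i) - int (y i)\<bar> \<le> int D" and "s \<le> i"
  shows "\<forall>x\<in>king_nbhd_upto d N s J. \<forall>y\<in>king_nbhd_upto d N s J. \<bar>int (x i) - int (y i)\<bar> \<le> int D"
proof (intro ballI)
  fix y1 y2 assume "y1 \<in> king_nbhd_upto d N s J" "y2 \<in> king_nbhd_upto d N s J"
  then obtain x1 x2 where "x1 \<in> J" "x1 i = y1 i" "x2 \<in> J" "x2 i = y2 i"
    unfolding king_nbhd_upto_def using \<open>s \<le> i\<close> by blast
  then show "\<bar>int (y1 i) - int (y2 i)\<bar> \<le> int D" using assms(1) by metis
qed

lemma card_king_nbhd_upto_ge: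
  assumes JP: "J \<subseteq> grid d N" and N: "D + 2 \<le> N"
    and spread: "\<forall>i<d. \<forall>x\<in>J. \<forall>y\<in>J. \<bar>int (x i) - int (y i)\<bar> \<le> int D"
  shows "s \<le> d \<Longrightarrow> (D + 2) ^ s * card J \<le> (D + 1) ^ s * card (king_nbhd_upto d N s J)"
proof (induction s)
  case 0 then show ?case using king_nbhd_upto_0[OF JP] by simp
next
  case (Suc s)
  let ?T = "king_nbhd_upto d N s J"
  have s: "s < d" using Suc by simp
  have "(D + 2) ^ Suc s * card J = (D + 2) * ((D + 2) ^ s * card J)"
    by (simp only: power_Suc mult.assoc)
  also have "\<dots> \<le> (D + 2) * ((D + 1) ^ s * card ?T)"
    using Suc s by (intro mult_le_mono2) simp
  also have "\<dots> = (D + 1) ^ s * ((D + 2) * card ?T)" by (simp only: ac_simps)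
  also have "\<dots> \<le> (D + 1) ^ s * ((D + 1) * card (line_nbhd d N s ?T))"
    using card_line_nbhd_ge[OF _ s N king_nbhd_upto_spread[OF _ le_refl]] spread s
    by (intro mult_le_mono2) (auto simp: king_nbhd_upto_def)
  also have "\<dots> \<le> (D + 1) ^ s * ((D + 1) * card (king_nbhd_upto d N (Suc s) J))"
    using line_nbhd_king_nbhd_upto finite_king_nbhd_upto by (intro mult_le_mono2 card_mono)
  also have "\<dots> = (D + 1) ^ Suc s * card (king_nbhd_upto d N (Suc s) J)"
    by (simp only: power_Suc ac_simps)
  finally show ?case .
qed

lemma card_king_nbhd_ge:
  assumes "J \<subseteq> grid d N" and "D + 2 \<le> N"
    and "\<forall>i<d. \<forall>x\<in>J. \<forall>y\<in>J. \<bar>int (x i) - int (y i)\<bar> \<le> int D"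
  shows "(D + 2) ^ d * card J \<le> (D + 1) ^ d * card (king_nbhd d N J)"
proof -
  have "king_nbhd_upto d N d J \<subseteq> king_nbhd d N J"
    unfolding king_nbhd_upto_def king_nbhd_def king_adj_def by auto
  moreover have "finite (king_nbhd d N J)"
    by (rule finite_subset[OF _ finite_grid]) (auto simp: king_nbhd_def)
  ultimately have "card (king_nbhd_upto d N d J) \<le> card (king_nbhd d N J)"
    by (intro card_mono)
  then show ?thesis using card_king_nbhd_upto_ge[OF assms le_refl]
    by (meson le_trans mult_le_mono2)
qed

lemma Bernoulli_inequality_nat:
  fixes a :: nat shows "a ^ d * (a + d) \<le> (a + 1) ^ d * a"
proof (induction d)
  case (Suc d)
  have "a ^ Suc d * (a + Suc d) = a * (a ^ d * (a + d)) + a ^ d * a" by (simp add: algebra_simps)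
  also have "\<dots> \<le> a * ((a + 1) ^ d * a) + (a + 1) ^ d * a"
    using Suc.IH by (intro add_mono mult_le_mono2 mult_le_mono1 power_mono) auto
  also have "\<dots> = (a + 1) ^ Suc d * a" by (simp add: algebra_simps)
  finally show ?case .
qed simp

text \<open>The dimension \<open>d\<close> is chosen so that Bernoulli's inequality gives
  \<open>((D + 2) / (D + 1)) ^ d \<ge> 1 + d / (D + 1) = K + 2\<close>.\<close>
lemma card_king_nbhd_ge_mult:
  assumes "J \<subseteq> grid d N" and "D + 2 \<le> N" and d: "d = (K + 1) * (D + 1)"
    and "\<forall>i<d. \<forall>x\<in>J. \<forall>y\<in>J. \<bar>int (x i) - int (y i)\<bar> \<le> int D"
  shows "(K + 2) * card J \<le> card (king_nbhd d N J)"
proof -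
  have "(D + 1) * ((K + 2) * (D + 1) ^ d) = (D + 1) ^ d * ((D + 1) + d)"
    unfolding d by (simp add: algebra_simps)
  also have "\<dots> \<le> (D + 1) * (D + 2) ^ d"
    using Bernoulli_inequality_nat[of "D + 1" d] by (simp add: ac_simps)
  finally have "(K + 2) * (D + 1) ^ d \<le> (D + 2) ^ d" by (simp only: mult_le_cancel1)
  then have "(D + 1) ^ d * ((K + 2) * card J) \<le> (D + 2) ^ d * card J"
    by (metis mult.assoc mult.commute mult_le_mono1)
  also have "\<dots> \<le> (D + 1) ^ d * card (king_nbhd d N J)"
    using card_king_nbhd_ge assms by blast
  finally show ?thesis by simp
qed

section \<open>Scaled copies of the king graph\<close>

definition scaled_copy :: "'a set \<Rightarrow> ('a \<Rightarrow> 'a \<Rightarrow> bool) \<Rightarrow> real \<Rightarrow> 'b set set \<Rightarrow> ('a \<Rightarrow> 'b) \<Rightarrow> bool" where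
  "scaled_copy P adj \<rho> E emb \<longleftrightarrow> inj_on emb P
     \<and> (\<forall>x\<in>P. \<forall>y\<in>P. adj x y \<longrightarrow> gd E (emb x) (emb y) \<le> ereal (2 * \<rho>))
     \<and> (\<forall>f :: 'a \<Rightarrow> real. (\<forall>x\<in>P. \<forall>y\<in>P. adj x y \<longrightarrow> \<bar>f x - f y\<bar> \<le> 1) \<longrightarrow>
          (\<forall>x\<in>P. \<forall>y\<in>P. ereal (\<rho> * \<bar>f x - f y\<bar>) \<le> gd E (emb x) (emb y)))"

lemma scaled_copy_upper:
  "scaled_copy P adj \<rho> E emb \<Longrightarrow> x \<in> P \<Longrightarrow> y \<in> P \<Longrightarrow> adj x y \<Longrightarrow>
    gd E (emb x) (emb y) \<le> ereal (2 * \<rho>)"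
  unfolding scaled_copy_def by blast

lemma scaled_copy_lower:
  assumes "scaled_copy P adj \<rho> E emb" and "\<And>x y. x \<in> P \<Longrightarrow> y \<in> P \<Longrightarrow> adj x y \<Longrightarrow> \<bar>f x - f y\<bar> \<le> 1"
    and "x \<in> P" "y \<in> P"
  shows "ereal (\<rho> * \<bar>f x - f y\<bar>) \<le> gd E (emb x) (emb y)"
  using assms unfolding scaled_copy_def by blast

lemma scaled_copy_grid_coord_le:
  assumes copy: "scaled_copy (grid d N) (king_adj d) \<rho> E emb" and "\<rho> > 0"
    and "x \<in> grid d N" "y \<in> grid d N" "i < d" and "gd E (emb x) (emb y) \<le> ereal (\<rho> * \<delta>)"
  shows "\<bar>real (x i) - real (y i)\<bar> \<le> \<delta>"
proof -
  have "ereal (\<rho> * \<bar>real (x i) - real (y i)\<bar>) \<le> gd E (emb x) (emb y)"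
    using \<open>i < d\<close> by (intro scaled_copy_lower[OF copy _ assms(3,4)]) (force simp: king_adj_def)
  then have "ereal (\<rho> * \<bar>real (x i) - real (y i)\<bar>) \<le> ereal (\<rho> * \<delta>)"
    using assms(6) by (rule order_trans)
  with \<open>\<rho> > 0\<close> show ?thesis by simp
qed

lemma scaled_copy_king_nbhd_subset:
  assumes copy: "scaled_copy (grid d N) (king_adj d) \<rho> E emb" and emb: "emb ` grid d N \<subseteq> V"
  shows "emb ` king_nbhd d N {x \<in> grid d N. emb x \<in> A} \<subseteq> nbhd E V (2 * \<rho>) A \<inter> emb ` grid d N"
proof (intro subsetI, elim imageE)
  fix v y assume v: "v = emb y" and y: "y \<in> king_nbhd d N {x \<in> grid d N. emb x \<in> A}"
  then obtain x where "x \<in> grid d N" "emb x \<in> A" "king_adj d x y" unfolding king_nbhd_def by blast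
  then have "gd E (emb x) v \<le> ereal (2 * \<rho>)"
    using scaled_copy_upper[OF copy] y v unfolding king_nbhd_def by auto
  then show "v \<in> nbhd E V (2 * \<rho>) A \<inter> emb ` grid d N"
    using emb y v \<open>emb x \<in> A\<close> unfolding nbhd_def king_nbhd_def by blast
qed

text \<open>At scale \<open>r = 4 \<rho>\<close> a \<open>(c r)\<close>-bounded set meets the copy in the image of a set of coordinate
  spread at most \<open>D\<close>, and the copy of its king-move neighbourhood lies in the \<open>r/2\<close>-neighbourhood.\<close>
lemma not_control_function_if_grid_copy:
  fixes V :: "'a set" and E :: "'a set set" and emb :: "(nat \<Rightarrow> nat) \<Rightarrow> 'a" and \<rho> c :: real
  assumes "finite V" and emb: "emb ` grid d N \<subseteq> V" and "\<rho> > 0"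
    and d: "d = (nat (k + 1) + 1) * (D + 1)" and N: "D + 2 \<le> N" and D: "4 * c \<le> real D"
    and copy: "scaled_copy (grid d N) (king_adj d) \<rho> E emb"
  shows "\<not> control_function V E k (\<lambda>r. c * r)"
proof (rule not_control_function_if_expanding)
  show "emb ` grid d N \<subseteq> V" "emb ` grid d N \<noteq> {}" "0 < 4 * \<rho>"
    using emb grid_nonempty N \<open>\<rho> > 0\<close> by auto
next
  have inj: "inj_on emb (grid d N)" using copy unfolding scaled_copy_def by blast
  fix A assume "A \<subseteq> V" and diam: "\<forall>x\<in>A. \<forall>y\<in>A. gd E x y \<le> ereal (c * (4 * \<rho>))"
  define J where "J = {x \<in> grid d N. emb x \<in> A}"
  have J: "J \<subseteq> grid d N" unfolding J_def by auto
  have "A \<inter> emb ` grid d N = emb ` J" unfolding J_def by auto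
  then have card_J: "card (A \<inter> emb ` grid d N) = card J"
    using inj_on_subset[OF inj J] by (simp add: card_image)
  have "\<bar>int (x i) - int (y i)\<bar> \<le> int D" if "i < d" "x \<in> J" "y \<in> J" for i x y
  proof -
    have "gd E (emb x) (emb y) \<le> ereal (\<rho> * (4 * c))"
      using diam that unfolding J_def by (simp add: ac_simps)
    then have "\<bar>real (x i) - real (y i)\<bar> \<le> 4 * c"
      using scaled_copy_grid_coord_le[OF copy \<open>\<rho> > 0\<close>] that J by blast
    with D show ?thesis by simp
  qed
  then have "(nat (k + 1) + 2) * card J \<le> card (king_nbhd d N J)"
    using card_king_nbhd_ge_mult[OF J N d] by blast
  also have "\<dots> = card (emb ` king_nbhd d N J)"
    using inj_on_subset[OF inj] by (simp add: card_image king_nbhd_def)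
  also have "\<dots> \<le> card (nbhd E V (4 * \<rho> / 2) A \<inter> emb ` grid d N)"
    using scaled_copy_king_nbhd_subset[OF copy emb, of A] finite_grid unfolding J_def
    by (intro card_mono) auto
  finally show "(nat (k + 1) + 1) * card (A \<inter> emb ` grid d N)
      \<le> card (nbhd E V (4 * \<rho> / 2) A \<inter> emb ` grid d N)"
    using card_J by simp
qed fact

section \<open>A \<open>1\<close>-planar graph realising an adjacency relation up to scale\<close>

lemma finite_card_le_1_if_subsingleton:
  assumes "\<forall>a\<in>S. \<forall>b\<in>S. a = b" shows "finite S \<and> card S \<le> 1"
proof (cases "S = {}")
  case False
  then obtain a where "a \<in> S" by auto
  then have "S = {a}" using assms by auto
  then show ?thesis by simp
qed simp

datatype node = Row nat nat | Link nat nat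

definition node_code :: "node \<Rightarrow> nat" where
  "node_code w = (case w of
     Row j x \<Rightarrow> 2 * prod_encode (j, x)
   | Link m t \<Rightarrow> Suc (2 * prod_encode (m, t)))"

lemma inj_node_code: "inj node_code"
proof (rule injI)
  fix u v assume "node_code u = node_code v"
  then show "u = v" unfolding node_code_def
    by (cases u; cases v)
      (auto dest: inj_onD[OF inj_prod_encode, of "(_, _)" "(_, _)", simplified], presburger+)
qed

lemma inv_node_code [simp]: "inv node_code (node_code w) = w"
  by (simp add: inj_node_code)

lemma open_segment_horizontal:
  assumes "x1 < x2"
  shows "open_segment (Complex x1 y) (Complex x2 y) = {z. Im z = y \<and> x1 < Re z \<and> Re z < x2}"
  using assms
  by (auto simp: open_segment_def closed_segment_same_Im closed_segment_eq_real_ivl complex_eq_iff)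

lemma open_segment_vertical:
  assumes "y1 < y2"
  shows "open_segment (Complex x y1) (Complex x y2) = {z. Re z = x \<and> y1 < Im z \<and> Im z < y2}"
  using assms
  by (auto simp: open_segment_def closed_segment_same_Re closed_segment_eq_real_ivl complex_eq_iff)

text \<open>Row \<open>j\<close> is a horizontal path at height \<open>\<ell> j\<close> with vertices at the even abscissae
  \<open>0, 2, ..., 2 n\<^sup>2\<close>.  A pair \<open>a < b\<close> with \<open>adj a b\<close> is coded as \<open>m = a n + b\<close> and joined by a
  vertical link at abscissa \<open>2 m + 1\<close> from row \<open>a\<close> to row \<open>b\<close>, subdivided into \<open>\<ell>\<close> edges of
  height \<open>b - a\<close> each; rows \<open>a\<close> and \<open>b\<close> get an extra vertex at \<open>2 m + 1\<close>, and the link crosses the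
  rows strictly between them in the interior of a row edge.  As \<open>\<ell>\<close> is a prime larger than every
  \<open>b - a\<close>, no subdivision vertex lies on a row and each link edge crosses at most one row.\<close>
locale row_link_layout =
  fixes n :: nat and adj :: "nat \<Rightarrow> nat \<Rightarrow> bool" and ell :: nat
  assumes ell_prime: "prime ell" and ell_big: "4 * n * n + 2 < ell"
begin

definition is_link :: "nat \<Rightarrow> bool" where
  "is_link m \<longleftrightarrow> m < n * n \<and> m div n < m mod n \<and> adj (m div n) (m mod n)"

definition attached :: "nat \<Rightarrow> nat \<Rightarrow> bool" where
  "attached j m \<longleftrightarrow> is_link m \<and> (j = m div n \<or> j = m mod n)"

definition link_node :: "nat \<Rightarrow> nat \<Rightarrow> node" where
  "link_node m t =
     (if t = 0 then Row (m div n) (2*m+1) else if t = ell then Row (m mod n) (2*m+1) else Link m t)"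

definition nodes :: "node set" where
  "nodes = {Row j (2*q) | j q. j < n \<and> q \<le> n*n} \<union> {Row j (2*m+1) | j m. j < n \<and> attached j m}
      \<union> {Link m t | m t. is_link m \<and> 0 < t \<and> t < ell}"

definition row_edge :: "nat \<Rightarrow> nat \<Rightarrow> nat \<Rightarrow> bool" where
  "row_edge j x1 x2 \<longleftrightarrow> (\<exists>q<n*n.
     (x1 = 2*q \<and> x2 = 2*q+1 \<and> attached j q) \<or> (x1 = 2*q+1 \<and> x2 = 2*q+2 \<and> attached j q)
   \<or> (x1 = 2*q \<and> x2 = 2*q+2 \<and> \<not> attached j q))"

definition edges :: "(node \<times> node) set" where
  "edges = {(Row j x1, Row j x2) | j x1 x2. j < n \<and> row_edge j x1 x2}
     \<union> {(link_node m t, link_node m (Suc t)) | m t. is_link m \<and> t < ell}"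

definition height :: "nat \<Rightarrow> nat \<Rightarrow> nat" where
  "height m t = ell * (m div n) + t * (m mod n - m div n)"

fun place :: "node \<Rightarrow> complex" where
  "place (Row j x) = Complex (real x) (real (ell * j))"
| "place (Link m t) = Complex (real (2*m+1)) (real (height m t))"

definition row_segment :: "nat \<Rightarrow> nat \<Rightarrow> nat \<Rightarrow> complex set" where
  "row_segment j x1 x2 = {z. Im z = real (ell * j) \<and> real x1 < Re z \<and> Re z < real x2}"

definition link_segment :: "nat \<Rightarrow> nat \<Rightarrow> complex set" where
  "link_segment m t =
     {z. Re z = real (2*m+1) \<and> real (height m t) < Im z \<and> Im z < real (height m (Suc t))}"

definition segment :: "node \<times> node \<Rightarrow> complex set" where
  "segment p = open_segment (place (fst p)) (place (snd p))"

lemma ell_pos: "ell > 0" using ell_big by simp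

lemma n_less_ell: "n < ell"
proof -
  have "n \<le> n * n" by (rule le_square)
  also have "\<dots> \<le> 4 * n * n" by simp
  finally show ?thesis using ell_big by linarith
qed

lemma link_facts:
  assumes "is_link m"
  shows "m div n < n" "m mod n < n" "m div n < m mod n"
    "0 < m mod n - m div n" "m mod n - m div n < ell"
proof -
  have mn: "m < n * n" "m div n < m mod n" using assms unfolding is_link_def by auto
  then have npos: "n > 0" by (cases n) auto
  show "m div n < n" using mn(1) npos by (simp add: less_mult_imp_div_less)
  show "m mod n < n" using npos by simp
  show "m div n < m mod n" by (rule mn(2))
  show "m mod n - m div n < ell" using \<open>m mod n < n\<close> n_less_ell by linarith
  show "0 < m mod n - m div n" using mn(2) by simp
qed

lemma height_0: "height m 0 = ell * (m div n)" unfolding height_def by simp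

lemma height_ell: "is_link m \<Longrightarrow> height m ell = ell * (m mod n)"
  using link_facts(3)[of m] unfolding height_def by (simp add: diff_mult_distrib2)

lemma height_Suc: "height m (Suc t) = height m t + (m mod n - m div n)" unfolding height_def by simp

lemma height_strict_mono: "is_link m \<Longrightarrow> t < t' \<Longrightarrow> height m t < height m t'"
  using link_facts(4)[of m] unfolding height_def by simp

lemma height_mono: "t \<le> t' \<Longrightarrow> height m t \<le> height m t'"
  unfolding height_def by simp

lemma height_not_row:
  assumes "is_link m" "0 < t" "t < ell" shows "height m t \<noteq> ell * j"
proof
  assume "height m t = ell * j"
  then have "ell dvd ell * (m div n) + t * (m mod n - m div n)" unfolding height_def by simp
  then have "ell dvd t * (m mod n - m div n)" by (simp add: dvd_add_right_iff)
  then have "ell dvd t \<or> ell dvd (m mod n - m div n)"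
    using ell_prime by (simp add: prime_dvd_mult_iff)
  then show False using link_facts[OF assms(1)] assms(2,3) by (auto dest: dvd_imp_le)
qed

lemma place_link_node:
  "is_link m \<Longrightarrow> t \<le> ell \<Longrightarrow> place (link_node m t) = Complex (real (2*m+1)) (real (height m t))"
  unfolding link_node_def using height_0 height_ell by auto

lemma link_node_in_nodes: assumes "is_link m" "t \<le> ell" shows "link_node m t \<in> nodes"
proof -
  have p: "attached (m div n) m" "attached (m mod n) m"
    using assms(1) unfolding attached_def by auto
  show ?thesis using assms link_facts[OF assms(1)] p unfolding link_node_def nodes_def by auto
qed

lemma row_edge_cases:
  assumes "row_edge j x1 x2" obtains q where "q < n*n" "x1 = 2*q" "x2 = 2*q+1" "attached j q"
  | q where "q < n*n" "x1 = 2*q+1" "x2 = 2*q+2" "attached j q"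
  | q where "q < n*n" "x1 = 2*q" "x2 = 2*q+2" "\<not> attached j q"
  using assms unfolding row_edge_def by blast

lemma row_edge_less: "row_edge j x1 x2 \<Longrightarrow> x1 < x2"
  by (erule row_edge_cases) auto

lemma edges_cases:
  assumes "p \<in> edges"
  obtains j x1 x2 where "p = (Row j x1, Row j x2)" "j < n" "row_edge j x1 x2"
      "segment p = row_segment j x1 x2"
  | m t where "p = (link_node m t, link_node m (Suc t))" "is_link m" "t < ell"
      "segment p = link_segment m t"
proof -
  consider (h) j x1 x2 where "p = (Row j x1, Row j x2)" "j < n" "row_edge j x1 x2"
    | (v) m t where "p = (link_node m t, link_node m (Suc t))" "is_link m" "t < ell"
    using assms unfolding edges_def by blast
  then show ?thesis
  proof cases
    case h
    have "segment p = row_segment j x1 x2" unfolding segment_def row_segment_def h(1)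
      using row_edge_less[OF h(3)] by (simp add: open_segment_horizontal)
    then show ?thesis using h that(1) by blast
  next
    case v
    have "segment p = link_segment m t" unfolding segment_def link_segment_def v(1)
      using place_link_node[OF v(2)] v(3) height_strict_mono[OF v(2), of t "Suc t"]
      by (simp add: open_segment_vertical)
    then show ?thesis using v that(2) by blast
  qed
qed

lemma row_segments_meet:
  assumes "row_edge j x1 x2" "row_edge j' x1' x2'"
    and "z \<in> row_segment j x1 x2" "z \<in> row_segment j' x1' x2'"
  shows "j = j' \<and> x1 = x1' \<and> x2 = x2'"
proof -
  have "real (ell * j) = real (ell * j')" using assms(3,4) unfolding row_segment_def by auto
  then have jj: "j = j'" using ell_pos by simp
  have "real x1 < real x2'" "real x1' < real x2" using assms(3,4) unfolding row_segment_def by auto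
  then have lt: "x1 < x2'" "x1' < x2" by simp_all
  have bnd: "\<exists>q. 2*q \<le> x1 \<and> x2 \<le> 2*q+2
      \<and> (attached j q \<longrightarrow> (x1 = 2*q \<and> x2 = 2*q+1) \<or> (x1 = 2*q+1 \<and> x2 = 2*q+2))
      \<and> (\<not> attached j q \<longrightarrow> x1 = 2*q \<and> x2 = 2*q+2)" if "row_edge j x1 x2" for j x1 x2
    using that
  proof (cases rule: row_edge_cases)
    case (1 q) then show ?thesis by (intro exI[of _ q]) auto
  next
    case (2 q) then show ?thesis by (intro exI[of _ q]) auto
  next
    case (3 q) then show ?thesis by (intro exI[of _ q]) auto
  qed
  obtain q where q: "2*q \<le> x1" "x2 \<le> 2*q+2"
      "attached j q \<longrightarrow> (x1 = 2*q \<and> x2 = 2*q+1) \<or> (x1 = 2*q+1 \<and> x2 = 2*q+2)"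
      "\<not> attached j q \<longrightarrow> x1 = 2*q \<and> x2 = 2*q+2"
    using bnd[OF assms(1)] by blast
  obtain q' where q': "2*q' \<le> x1'" "x2' \<le> 2*q'+2"
      "attached j q' \<longrightarrow> (x1' = 2*q' \<and> x2' = 2*q'+1) \<or> (x1' = 2*q'+1 \<and> x2' = 2*q'+2)"
      "\<not> attached j q' \<longrightarrow> x1' = 2*q' \<and> x2' = 2*q'+2"
    using bnd[OF assms(2)] jj by blast
  have qq: "q = q'" using q(1,2) q'(1,2) lt by linarith
  have "x1 = x1' \<and> x2 = x2'"
  proof (cases "attached j q")
    case True
    then show ?thesis using q(3) q'(3) qq lt by auto
  next
    case False
    then show ?thesis using q(4) q'(4) qq by auto
  qed
  then show ?thesis using jj by simp
qed

lemma link_segments_meet: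
  assumes "is_link m" "is_link m'" "z \<in> link_segment m t" "z \<in> link_segment m' t'"
  shows "m = m' \<and> t = t'"
proof -
  have "real (2*m+1) = real (2*m'+1)" using assms(3,4) unfolding link_segment_def by auto
  then have mm: "m = m'" by simp
  have "real (height m t) < real (height m (Suc t'))" "real (height m t') < real (height m (Suc t))"
    using assms(3,4) mm unfolding link_segment_def by auto
  then have "height m t < height m (Suc t')" "height m t' < height m (Suc t)" by simp_all
  then have "t < Suc t'" "t' < Suc t"
    using height_strict_mono[OF assms(1)] by (metis not_less_iff_gr_or_eq)+
  then show ?thesis using mm by simp
qed

lemma row_link_crossing:
  assumes "row_edge j x1 x2" "is_link m" "z \<in> row_segment j x1 x2" "z \<in> link_segment m t"
  shows "z = Complex (real (2*m+1)) (real (ell*j)) \<and> x1 = 2*m \<and> x2 = 2*m+2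
    \<and> height m t < ell*j \<and> ell*j < height m (Suc t)"
proof -
  have z: "Re z = real (2*m+1)" "Im z = real (ell*j)"
    using assms(3,4) unfolding row_segment_def link_segment_def by auto
  have "real x1 < real (2*m+1)" "real (2*m+1) < real x2"
    using assms(3) z unfolding row_segment_def by auto
  then have lt: "x1 < 2*m+1" "2*m+1 < x2" by linarith+
  have "real (height m t) < real (ell*j)" "real (ell*j) < real (height m (Suc t))"
    using assms(4) z unfolding link_segment_def by auto
  then have "height m t < ell*j" "ell*j < height m (Suc t)" by linarith+
  moreover have "x1 = 2*m \<and> x2 = 2*m+2"
    using assms(1) by (cases rule: row_edge_cases) (use lt in auto)
  moreover have "z = Complex (real (2*m+1)) (real (ell*j))" using z by (simp add: complex_eq_iff)
  ultimately show ?thesis by simp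
qed

text \<open>A link edge rises by less than \<open>\<ell>\<close>, the distance between consecutive rows.\<close>
lemma crossed_row_unique:
  assumes "is_link m" "height m t < ell*j" "ell*j < height m (Suc t)"
    and "height m t < ell*j'" "ell*j' < height m (Suc t)"
  shows "j = j'"
proof -
  have "ell * j < ell * Suc j'" "ell * j' < ell * Suc j"
    using assms height_Suc[of m t] link_facts(5)[OF assms(1)] unfolding mult_Suc_right by linarith+
  then have "j < Suc j'" "j' < Suc j" using mult_less_cancel1 by blast+
  then show ?thesis by simp
qed

lemma crossing_step_unique:
  assumes "is_link m" "height m t < ell*j" "ell*j < height m (Suc t)"
    and "height m t' < ell*j" "ell*j < height m (Suc t')"
  shows "t = t'"
proof -
  have "height m t < height m (Suc t')" "height m t' < height m (Suc t)" using assms by linarith+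
  then have "t < Suc t'" "t' < Suc t"
    using height_strict_mono[OF assms(1)] by (metis not_less_iff_gr_or_eq)+
  then show ?thesis by simp
qed

lemma row_edge_crossing_cases:
  assumes row: "row_edge j x1 x2" and "p' \<in> edges" "p' \<noteq> (Row j x1, Row j x2)"
    and z: "z \<in> row_segment j x1 x2" "z \<in> segment p'"
  obtains m t where "p' = (link_node m t, link_node m (Suc t))" "is_link m" "x1 = 2*m"
    "z = Complex (real (2*m+1)) (real (ell*j))" "height m t < ell*j" "ell*j < height m (Suc t)"
proof (cases rule: edges_cases[OF \<open>p' \<in> edges\<close>])
  case (1 j' x1' x2')
  then have "j = j' \<and> x1 = x1' \<and> x2 = x2'" using row_segments_meet[OF row] z by auto
  with 1 \<open>p' \<noteq> (Row j x1, Row j x2)\<close> show ?thesis by simp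
next
  case (2 m t)
  then have "z \<in> link_segment m t" using z(2) by simp
  from row_link_crossing[OF row \<open>is_link m\<close> z(1) this] show ?thesis
    by (intro that[of m t]) (use 2 in auto)
qed

lemma link_edge_crossing_cases:
  assumes link: "is_link m" and "p' \<in> edges" "p' \<noteq> (link_node m t, link_node m (Suc t))"
    and z: "z \<in> link_segment m t" "z \<in> segment p'"
  obtains j where "p' = (Row j (2*m), Row j (2*m+2))"
    "z = Complex (real (2*m+1)) (real (ell*j))" "height m t < ell*j" "ell*j < height m (Suc t)"
proof (cases rule: edges_cases[OF \<open>p' \<in> edges\<close>])
  case (1 j x1 x2)
  then have "z \<in> row_segment j x1 x2" using z(2) by simp
  from row_link_crossing[OF \<open>row_edge j x1 x2\<close> link this z(1)] show ?thesis
    by (intro that[of j]) (use 1 in auto)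
next
  case (2 m' t')
  then have "m = m' \<and> t = t'" using link_segments_meet[OF link] z by auto
  with 2 \<open>p' \<noteq> (link_node m t, link_node m (Suc t))\<close> show ?thesis by simp
qed

lemma at_most_one_crossing:
  assumes p: "p \<in> edges" and p1: "p1 \<in> edges" "p1 \<noteq> p" and p2: "p2 \<in> edges" "p2 \<noteq> p"
    and z1: "z1 \<in> segment p" "z1 \<in> segment p1" and z2: "z2 \<in> segment p" "z2 \<in> segment p2"
  shows "p1 = p2 \<and> z1 = z2"
  using p
proof (cases rule: edges_cases)
  case (1 j x1 x2)
  obtain m1 t1 where c1: "p1 = (link_node m1 t1, link_node m1 (Suc t1))" "is_link m1" "x1 = 2*m1"
    "z1 = Complex (real (2*m1+1)) (real (ell*j))"
    "height m1 t1 < ell*j" "ell*j < height m1 (Suc t1)"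
    using row_edge_crossing_cases[OF \<open>row_edge j x1 x2\<close> p1(1) _ _ z1(2)] p1(2) z1(1) 1 by auto
  obtain m2 t2 where c2: "p2 = (link_node m2 t2, link_node m2 (Suc t2))" "is_link m2" "x1 = 2*m2"
    "z2 = Complex (real (2*m2+1)) (real (ell*j))"
    "height m2 t2 < ell*j" "ell*j < height m2 (Suc t2)"
    using row_edge_crossing_cases[OF \<open>row_edge j x1 x2\<close> p2(1) _ _ z2(2)] p2(2) z2(1) 1 by auto
  have "m1 = m2" using c1(3) c2(3) by simp
  then have "t1 = t2" using crossing_step_unique[OF c1(2) c1(5,6)] c2(5,6) by simp
  then show ?thesis using c1 c2 \<open>m1 = m2\<close> by simp
next
  case (2 m t)
  obtain j1 where c1: "p1 = (Row j1 (2*m), Row j1 (2*m+2))"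
    "z1 = Complex (real (2*m+1)) (real (ell*j1))" "height m t < ell*j1" "ell*j1 < height m (Suc t)"
    using link_edge_crossing_cases[OF \<open>is_link m\<close> p1(1) _ _ z1(2)] p1(2) z1(1) 2 by auto
  obtain j2 where c2: "p2 = (Row j2 (2*m), Row j2 (2*m+2))"
    "z2 = Complex (real (2*m+1)) (real (ell*j2))" "height m t < ell*j2" "ell*j2 < height m (Suc t)"
    using link_edge_crossing_cases[OF \<open>is_link m\<close> p2(1) _ _ z2(2)] p2(2) z2(1) 2 by auto
  have "j1 = j2" using crossed_row_unique[OF \<open>is_link m\<close> c1(3,4) c2(3,4)] .
  then show ?thesis using c1 c2 by simp
qed

lemma nodes_cases:
  assumes "w \<in> nodes"
  obtains j q where "w = Row j (2*q)" "j < n" "q \<le> n*n"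
  | j m where "w = Row j (2*m+1)" "j < n" "attached j m"
  | m t where "w = Link m t" "is_link m" "0 < t" "t < ell"
  using assms unfolding nodes_def by blast

lemma place_notin_row_segment:
  assumes "row_edge j x1 x2" and w: "w \<in> nodes"
  shows "place w \<notin> row_segment j x1 x2"
proof
  assume inH: "place w \<in> row_segment j x1 x2"
  from w show False
  proof (cases rule: nodes_cases)
    case (1 j' q)
    then have "real x1 < real (2*q)" "real (2*q) < real x2"
      using inH unfolding row_segment_def by auto
    then have lt: "x1 < 2*q" "2*q < x2" by linarith+
    from \<open>row_edge j x1 x2\<close> show False by (cases rule: row_edge_cases) (use lt in auto)
  next
    case (2 j' m)
    then have "real (ell*j') = real (ell*j)" "real x1 < real (2*m+1)" "real (2*m+1) < real x2"
      using inH unfolding row_segment_def by auto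
    then have jj: "j' = j" and lt: "x1 < 2*m+1" "2*m+1 < x2" using ell_pos by simp_all
    from \<open>row_edge j x1 x2\<close> show False
    proof (cases rule: row_edge_cases)
      case (3 q)
      then have "q = m" using lt by linarith
      then show False using 3 2 jj by simp
    qed (use lt in auto)
  next
    case (3 m t)
    then have "real (height m t) = real (ell*j)" using inH unfolding row_segment_def by auto
    then have "height m t = ell * j" by linarith
    then show False using height_not_row[OF 3(2-4)] by simp
  qed
qed

text \<open>A link passes through an intermediate row at the abscissa \<open>2 m + 1\<close>, where that row has no
  vertex because it is not attached to the link.\<close>
lemma place_notin_link_segment:
  assumes "is_link m" "t < ell" and w: "w \<in> nodes"
  shows "place w \<notin> link_segment m t"
proof
  assume inV: "place w \<in> link_segment m t"
  from w show False
  proof (cases rule: nodes_cases)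
    case (1 j' q)
    then have "real (2*q) = real (2*m+1)" using inV unfolding link_segment_def by auto
    then have "2*q = 2*m+1" by linarith
    then show False by presburger
  next
    case (2 j' m')
    then have r: "real (2*m'+1) = real (2*m+1)" "real (ell*j') > real (height m t)"
        "real (ell*j') < real (height m (Suc t))"
      using inV unfolding link_segment_def by auto
    have "height m 0 \<le> height m t" "height m (Suc t) \<le> height m ell"
      using \<open>t < ell\<close> by (simp_all add: height_mono)
    then have "ell * (m div n) < ell * j'" "ell * j' < ell * (m mod n)"
      using r(2,3) height_0[of m] height_ell[OF \<open>is_link m\<close>] by linarith+
    then have "m div n < j'" "j' < m mod n" by simp_all
    then show False using 2(3) r(1) unfolding attached_def by auto
  next
    case (3 m' t')
    then have "real (2*m'+1) = real (2*m+1)" "real (height m' t') > real (height m t)"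
        "real (height m' t') < real (height m (Suc t))"
      using inV unfolding link_segment_def by auto
    then have "height m t < height m t'" "height m t' < height m (Suc t)" by simp_all
    then have "t < t'" "t' < Suc t" using height_strict_mono[OF \<open>is_link m\<close>]
      by (metis not_less_iff_gr_or_eq)+
    then show False by simp
  qed
qed

lemma place_notin_segment:
  assumes "p \<in> edges" and "w \<in> nodes"
  shows "place w \<notin> segment p"
  using assms(1) by (cases rule: edges_cases)
    (simp_all add: place_notin_row_segment place_notin_link_segment assms(2))

lemma inj_on_place: "inj_on place nodes"
proof (rule inj_onI)
  fix u v assume u: "u \<in> nodes" and v: "v \<in> nodes" and eq: "place u = place v"
  show "u = v"
  proof (cases u)
    case (Row j x)
    show ?thesis
    proof (cases v)
      case (Row j' x')
      then show ?thesis using eq \<open>u = Row j x\<close> ell_pos by (auto simp: complex_eq_iff)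
    next
      case (Link m t)
      then have "real (ell*j) = real (height m t)"
        using eq \<open>u = Row j x\<close> by (auto simp: complex_eq_iff)
      moreover have "is_link m" "0 < t" "t < ell" using v Link by (auto elim: nodes_cases)
      ultimately show ?thesis using height_not_row by (metis of_nat_eq_iff)
    qed
  next
    case (Link m t)
    show ?thesis
    proof (cases v)
      case (Row j x)
      then have "real (ell*j) = real (height m t)"
        using eq \<open>u = Link m t\<close> by (auto simp: complex_eq_iff)
      moreover have "is_link m" "0 < t" "t < ell" using u Link by (auto elim: nodes_cases)
      ultimately show ?thesis using height_not_row by (metis of_nat_eq_iff)
    next
      case (Link m' t')
      then have mm: "m = m'" and "height m t = height m t'"
        using eq \<open>u = Link m t\<close> by (auto simp: complex_eq_iff)
      moreover have "is_link m" using u \<open>u = Link m t\<close> by (auto elim: nodes_cases)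
      ultimately have "t = t'" using height_strict_mono by (metis not_less_iff_gr_or_eq less_irrefl)
      then show ?thesis using mm \<open>u = Link m t\<close> Link by simp
    qed
  qed
qed

lemma edge_ends:
  assumes "p \<in> edges" shows "fst p \<in> nodes" "snd p \<in> nodes" "place (fst p) \<noteq> place (snd p)"
proof -
  have "fst p \<in> nodes \<and> snd p \<in> nodes \<and> place (fst p) \<noteq> place (snd p)"
    using assms
  proof (cases rule: edges_cases)
    case (1 j x1 x2)
    from 1(3) have "Row j x1 \<in> nodes \<and> Row j x2 \<in> nodes"
    proof (cases rule: row_edge_cases)
      case (1 q) then show ?thesis using \<open>j < n\<close> unfolding nodes_def by auto
    next
      case (2 q)
      then have "Row j x2 = Row j (2*(Suc q))" "Suc q \<le> n*n" by auto
      then show ?thesis using 2 \<open>j < n\<close> unfolding nodes_def by blast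
    next
      case (3 q)
      then have a: "Row j x2 = Row j (2*(Suc q))" "Suc q \<le> n*n" "Row j x1 = Row j (2*q)" "q \<le> n*n"
        by auto
      have "Row j x1 \<in> nodes" unfolding nodes_def using a(3,4) \<open>j < n\<close> by blast
      moreover have "Row j x2 \<in> nodes" unfolding nodes_def using a(1,2) \<open>j < n\<close> by blast
      ultimately show ?thesis by blast
    qed
    then show ?thesis using 1 row_edge_less[OF 1(3)] by (auto simp: complex_eq_iff)
  next
    case (2 m t)
    then show ?thesis
      using link_node_in_nodes[of m t] link_node_in_nodes[of m "Suc t"] place_link_node[of m t]
        place_link_node[of m "Suc t"] height_strict_mono[of m t "Suc t"]
      by (auto simp: complex_eq_iff)
  qed
  then show "fst p \<in> nodes" "snd p \<in> nodes" "place (fst p) \<noteq> place (snd p)" by auto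
qed

lemma finite_nodes: "finite nodes"
proof -
  let ?B = "case_prod Row ` ({..<n} \<times> {..2*n*n+1}) \<union> case_prod Link ` ({..<n*n} \<times> {..<ell})"
  have "nodes \<subseteq> ?B"
  proof
    fix w assume "w \<in> nodes"
    then show "w \<in> ?B"
    proof (cases rule: nodes_cases)
      case (1 j q) then show ?thesis by (auto intro!: image_eqI[of _ _ "(j, 2*q)"])
    next
      case (2 j m)
      then have "m < n*n" unfolding attached_def is_link_def by auto
      then show ?thesis using 2 by (auto intro!: image_eqI[of _ _ "(j, 2*m+1)"])
    next
      case (3 m t)
      then have "m < n*n" unfolding is_link_def by auto
      then show ?thesis using 3 by (auto intro!: image_eqI[of _ _ "(m, t)"])
    qed
  qed
  then show ?thesis by (rule finite_subset) auto
qed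

text \<open>The class of graphs in the theorem lives on \<open>nat\<close>, so the layout is transported along the
  injective coding of nodes.  An edge is drawn as a straight segment, oriented from its smaller to
  its larger code so that the curve depends only on the edge as a set.\<close>
definition vertices_nat :: "nat set" where
  "vertices_nat = node_code ` nodes"

definition edges_nat :: "nat set set" where
  "edges_nat = (\<lambda>p. {node_code (fst p), node_code (snd p)}) ` edges"

definition place_nat :: "nat \<Rightarrow> complex" where
  "place_nat v = place (inv node_code v)"

definition curve_nat :: "nat set \<Rightarrow> real \<Rightarrow> complex" where
  "curve_nat e = linepath (place_nat (Min e)) (place_nat (Max e))"

lemma place_nat_node_code[simp]: "place_nat (node_code w) = place w"
  unfolding place_nat_def by simp

lemma curve_nat_edge:
  assumes p: "p \<in> edges"
  defines "e \<equiv> {node_code (fst p), node_code (snd p)}"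
  shows "{pathstart (curve_nat e), pathfinish (curve_nat e)} = place_nat ` e"
    and "edge_interior (curve_nat e) = segment p"
    and "arc (curve_nat e)"
proof -
  let ?a = "node_code (fst p)" and ?b = "node_code (snd p)"
  have ne: "place (fst p) \<noteq> place (snd p)" using edge_ends[OF p] by simp
  have ends: "(Min e = ?a \<and> Max e = ?b) \<or> (Min e = ?b \<and> Max e = ?a)"
    unfolding e_def by (cases "?a \<le> ?b") (auto simp: min_def max_def)
  show "{pathstart (curve_nat e), pathfinish (curve_nat e)} = place_nat ` e"
    using ends unfolding curve_nat_def e_def by auto
  show "edge_interior (curve_nat e) = segment p"
    using ends unfolding curve_nat_def edge_interior_def segment_def
    by (auto simp: open_segment_def closed_segment_commute)
  show "arc (curve_nat e)"
    using ends ne unfolding curve_nat_def by auto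
qed

lemma edges_nat_cases:
  assumes "e \<in> edges_nat" obtains p where "p \<in> edges" "e = {node_code (fst p), node_code (snd p)}"
  using assms unfolding edges_nat_def by auto

lemma crossings_nat_subsingleton:
  assumes "e \<in> edges_nat"
  defines "S \<equiv> {(f, z). f \<in> edges_nat \<and> f \<noteq> e
                      \<and> z \<in> edge_interior (curve_nat e) \<inter> edge_interior (curve_nat f)}"
  shows "\<forall>a\<in>S. \<forall>b\<in>S. a = b"
proof (intro ballI)
  obtain p where p: "p \<in> edges" "e = {node_code (fst p), node_code (snd p)}"
    using assms(1) by (rule edges_nat_cases)
  have crossing: "\<exists>p'. p' \<in> edges \<and> p' \<noteq> p \<and> f = {node_code (fst p'), node_code (snd p')}
      \<and> z \<in> segment p \<and> z \<in> segment p'" if "(f, z) \<in> S" for f z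
  proof -
    have "f \<in> edges_nat" using that unfolding S_def by simp
    then obtain p' where p': "p' \<in> edges" "f = {node_code (fst p'), node_code (snd p')}"
      by (rule edges_nat_cases)
    moreover have "f \<noteq> e" "z \<in> edge_interior (curve_nat e)" "z \<in> edge_interior (curve_nat f)"
      using that unfolding S_def by auto
    ultimately show ?thesis using p curve_nat_edge(2)[OF p(1)] curve_nat_edge(2)[OF p'(1)]
      by (intro exI[of _ p']) auto
  qed
  fix a b assume "a \<in> S" "b \<in> S"
  then obtain f1 z1 f2 z2 where ab: "a = (f1, z1)" "b = (f2, z2)" "(f1, z1) \<in> S" "(f2, z2) \<in> S"
    by (metis surj_pair)
  obtain p1 p2 where "p1 \<in> edges" "p1 \<noteq> p" "f1 = {node_code (fst p1), node_code (snd p1)}"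
      "z1 \<in> segment p" "z1 \<in> segment p1"
    and "p2 \<in> edges" "p2 \<noteq> p" "f2 = {node_code (fst p2), node_code (snd p2)}"
      "z2 \<in> segment p" "z2 \<in> segment p2"
    using crossing[OF ab(3)] crossing[OF ab(4)] by blast
  then show "a = b" using at_most_one_crossing[OF p(1)] ab(1,2) by metis
qed

lemma one_planar_drawing_nat: "one_planar_drawing vertices_nat edges_nat place_nat curve_nat"
  unfolding one_planar_drawing_def
proof (intro conjI ballI)
  show "inj_on place_nat vertices_nat" unfolding vertices_nat_def using inj_on_place inj_node_code
    by (auto simp: inj_on_def)
next
  fix e assume "e \<in> edges_nat"
  then obtain p where p: "p \<in> edges" "e = {node_code (fst p), node_code (snd p)}"
    by (rule edges_nat_cases)
  show "arc (curve_nat e)" using curve_nat_edge(3)[OF p(1)] p(2) by simp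
  show "{pathstart (curve_nat e), pathfinish (curve_nat e)} = place_nat ` e"
    using curve_nat_edge(1)[OF p(1)] p(2) by simp
  show "edge_interior (curve_nat e) \<inter> place_nat ` vertices_nat = {}"
    using curve_nat_edge(2)[OF p(1)] p(2) place_notin_segment[OF p(1)]
    unfolding vertices_nat_def by auto
next
  fix e assume "e \<in> edges_nat"
  let ?S = "{(f, z). f \<in> edges_nat \<and> f \<noteq> e
                      \<and> z \<in> edge_interior (curve_nat e) \<inter> edge_interior (curve_nat f)}"
  from finite_card_le_1_if_subsingleton[OF crossings_nat_subsingleton[OF \<open>e \<in> edges_nat\<close>]]
  show "finite ?S" "card ?S \<le> 1" by blast+
qed

lemma finite_graph_nat: "finite_graph vertices_nat edges_nat"
  unfolding finite_graph_def
proof (intro conjI ballI)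
  show "finite vertices_nat" unfolding vertices_nat_def using finite_nodes by simp
next
  fix e assume "e \<in> edges_nat"
  then obtain p where p: "p \<in> edges" "e = {node_code (fst p), node_code (snd p)}"
    by (rule edges_nat_cases)
  have "node_code (fst p) \<noteq> node_code (snd p)"
    using edge_ends(3)[OF p(1)] inj_node_code by (metis injD)
  moreover have "node_code (fst p) \<in> vertices_nat" "node_code (snd p) \<in> vertices_nat"
    using edge_ends[OF p(1)] unfolding vertices_nat_def by auto
  ultimately show "\<exists>u v. e = {u, v} \<and> u \<noteq> v \<and> u \<in> vertices_nat \<and> v \<in> vertices_nat"
    using p(2) by blast
qed

text \<open>Interpolating \<open>f\<close> linearly along each link changes it by at most \<open>1 / \<ell>\<close> per edge
  when \<open>f\<close> is \<open>1\<close>-Lipschitz for \<open>adj\<close>.\<close>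
definition interpolation :: "(nat \<Rightarrow> real) \<Rightarrow> node \<Rightarrow> real" where
  "interpolation f w = (case w of Row j x \<Rightarrow> f j
     | Link m t \<Rightarrow> f (m div n) + real t * (f (m mod n) - f (m div n)) / real ell)"

lemma interpolation_link_node:
  "is_link m \<Longrightarrow> t \<le> ell \<Longrightarrow>
    interpolation f (link_node m t) = f (m div n) + real t * (f (m mod n) - f (m div n)) / real ell"
  using ell_pos unfolding link_node_def interpolation_def by auto

lemma interpolation_edge:
  assumes lip: "\<And>a b. a < b \<Longrightarrow> b < n \<Longrightarrow> adj a b \<Longrightarrow> \<bar>f a - f b\<bar> \<le> 1" and "p \<in> edges"
  shows "\<bar>interpolation f (fst p) - interpolation f (snd p)\<bar> \<le> 1 / real ell"
  using \<open>p \<in> edges\<close>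
proof (cases rule: edges_cases)
  case (1 j x1 x2)
  then show ?thesis using ell_pos by (simp add: interpolation_def)
next
  case (2 m t)
  have "interpolation f (fst p) - interpolation f (snd p) = (f (m div n) - f (m mod n)) / real ell"
    using 2 interpolation_link_node[of m t f] interpolation_link_node[of m "Suc t" f]
    by (simp add: field_simps)
  moreover have "\<bar>f (m div n) - f (m mod n)\<bar> \<le> 1"
    using lip link_facts[OF \<open>is_link m\<close>] \<open>is_link m\<close> unfolding is_link_def by blast
  ultimately show ?thesis using ell_pos by (simp add: divide_right_mono)
qed

lemma gd_row_lower:
  assumes lip: "\<And>a b. a < b \<Longrightarrow> b < n \<Longrightarrow> adj a b \<Longrightarrow> \<bar>f a - f b\<bar> \<le> 1"
  shows "ereal (real ell * \<bar>f j - f j'\<bar>)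
    \<le> gd edges_nat (node_code (Row j 0)) (node_code (Row j' 0))"
proof -
  let ?\<phi> = "\<lambda>v. interpolation f (inv node_code v)"
  have "\<bar>?\<phi> x - ?\<phi> y\<bar> \<le> 1 / real ell" if e: "{x, y} \<in> edges_nat" for x y
  proof -
    obtain p where p: "p \<in> edges" "{x, y} = {node_code (fst p), node_code (snd p)}"
      using e by (rule edges_nat_cases)
    then have "(x, y) = (node_code (fst p), node_code (snd p))
        \<or> (x, y) = (node_code (snd p), node_code (fst p))"
      by (metis doubleton_eq_iff)
    then show ?thesis using interpolation_edge[OF lip p(1)] by (auto simp: abs_minus_commute)
  qed
  from gd_lower_bound_lipschitz[where \<phi> = ?\<phi>, OF this] ell_pos
  have "ereal (\<bar>?\<phi> u - ?\<phi> v\<bar> / (1 / real ell)) \<le> gd edges_nat u v" for u v by simp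
  from this[of "node_code (Row j 0)" "node_code (Row j' 0)"] show ?thesis
    by (simp add: interpolation_def mult.commute)
qed

lemma walk_edges_nat: "(u, v) \<in> edges \<Longrightarrow> walk edges_nat (node_code u) (node_code v) 1"
  by (intro walk_edge) (force simp: edges_nat_def)

lemma walk_row_block:
  assumes "j < n" "q < n * n"
  obtains s where "s \<le> 2" "walk edges_nat (node_code (Row j (2*q))) (node_code (Row j (2*q+2))) s"
proof (cases "attached j q")
  case True
  then have "(Row j (2*q), Row j (2*q+1)) \<in> edges" "(Row j (2*q+1), Row j (2*q+2)) \<in> edges"
    using assms unfolding edges_def row_edge_def by blast+
  from walk_trans[OF this[THEN walk_edges_nat]] that[of "1 + 1"] show ?thesis by simp
next
  case False
  then have "(Row j (2*q), Row j (2*q+2)) \<in> edges"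
    using assms unfolding edges_def row_edge_def by blast
  from walk_edges_nat[OF this] that[of 1] show ?thesis by simp
qed

lemma walk_along_row:
  assumes "j < n"
  shows "q \<le> n * n \<Longrightarrow> \<exists>s\<le>2*q. walk edges_nat (node_code (Row j 0)) (node_code (Row j (2*q))) s"
proof (induction q)
  case 0 then show ?case using walk_refl by auto
next
  case (Suc q)
  then obtain s where s: "s \<le> 2*q"
    "walk edges_nat (node_code (Row j 0)) (node_code (Row j (2*q))) s" by auto
  obtain s' where "s' \<le> 2" "walk edges_nat (node_code (Row j (2*q))) (node_code (Row j (2*q+2))) s'"
    using walk_row_block[OF assms] Suc.prems by (metis Suc_le_lessD)
  with s show ?case by (intro exI[of _ "s + s'"]) (auto dest: walk_trans)
qed

lemma walk_along_link:
  assumes "is_link m"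
  shows "t \<le> ell \<Longrightarrow> walk edges_nat (node_code (link_node m 0)) (node_code (link_node m t)) t"
proof (induction t)
  case 0 show ?case by (rule walk_refl)
next
  case (Suc t)
  then have "t < ell" by simp
  then have "(link_node m t, link_node m (Suc t)) \<in> edges" using assms unfolding edges_def by blast
  from walk_trans[OF Suc.IH walk_edges_nat[OF this]] \<open>t < ell\<close> show ?case by simp
qed

text \<open>Walk along row \<open>a\<close> to the link \<open>m = a n + b\<close>, along the link, and back along row \<open>b\<close>: the
  length \<open>4 m + 2 + \<ell>\<close> is at most \<open>2 \<ell>\<close> because \<open>\<ell> > 4 n\<^sup>2 + 2\<close>.\<close>
lemma gd_row_upper:
  assumes "a < b" "b < n" "adj a b"
  shows "gd edges_nat (node_code (Row a 0)) (node_code (Row b 0)) \<le> ereal (2 * real ell)"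
proof -
  define m where "m = a * n + b"
  have m: "m div n = a" "m mod n = b" unfolding m_def using assms by auto
  have "m < n * n"
  proof -
    have "a * n + b < (a + 1) * n" using assms by simp
    also have "\<dots> \<le> n * n" using assms by (intro mult_le_mono1) simp
    finally show ?thesis unfolding m_def .
  qed
  then have link: "is_link m" unfolding is_link_def using m assms by simp
  obtain s1 where s1: "s1 \<le> 2*m" "walk edges_nat (node_code (Row a 0)) (node_code (Row a (2*m))) s1"
    using walk_along_row[of a m] assms \<open>m < n*n\<close> by auto
  obtain s2 where s2: "s2 \<le> 2*m" "walk edges_nat (node_code (Row b 0)) (node_code (Row b (2*m))) s2"
    using walk_along_row[of b m] assms \<open>m < n*n\<close> by auto
  have "attached a m" "attached b m" unfolding attached_def using link m by auto
  then have "(Row a (2*m), Row a (2*m+1)) \<in> edges" "(Row b (2*m), Row b (2*m+1)) \<in> edges"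
    using assms \<open>m < n*n\<close> unfolding edges_def row_edge_def by auto
  note steps = this[THEN walk_edges_nat]
  have "link_node m 0 = Row a (2*m+1)" "link_node m ell = Row b (2*m+1)"
    unfolding link_node_def using m ell_pos by auto
  then have up: "walk edges_nat (node_code (Row a (2*m+1))) (node_code (Row b (2*m+1))) ell"
    using walk_along_link[OF link, of ell] by simp
  have "walk edges_nat (node_code (Row a 0)) (node_code (Row b 0)) (s1 + 1 + ell + 1 + s2)"
    by (rule walk_trans[OF walk_trans[OF walk_trans[OF walk_trans[OF s1(2) steps(1)] up]
          walk_sym[OF steps(2)]] walk_sym[OF s2(2)]])
  then have "gd edges_nat (node_code (Row a 0)) (node_code (Row b 0))
      \<le> real (s1 + 1 + ell + 1 + s2)"
    by (rule gd_le_walk)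
  also have "\<dots> \<le> ereal (2 * real ell)" using s1(1) s2(1) \<open>m < n*n\<close> ell_big by simp
  finally show ?thesis .
qed

lemma rows_in_vertices_nat: "j < n \<Longrightarrow> node_code (Row j 0) \<in> vertices_nat"
proof -
  assume "j < n"
  then have "Row j (2 * 0) \<in> nodes" unfolding nodes_def by blast
  then show ?thesis unfolding vertices_nat_def by simp
qed

lemma scaled_copy_rows:
  assumes "symp adj"
  shows "scaled_copy {..<n} adj (real ell) edges_nat (\<lambda>j. node_code (Row j 0))"
  unfolding scaled_copy_def
proof (intro conjI ballI allI impI)
  show "inj_on (\<lambda>j. node_code (Row j 0)) {..<n}"
    using inj_node_code by (auto simp: inj_on_def dest: injD)
next
  fix a b assume "a \<in> {..<n}" "b \<in> {..<n}" "adj a b"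
  consider "a < b" | "a = b" | "b < a" by linarith
  then show "gd edges_nat (node_code (Row a 0)) (node_code (Row b 0)) \<le> ereal (2 * real ell)"
  proof cases
    case 1
    then show ?thesis using gd_row_upper \<open>b \<in> {..<n}\<close> \<open>adj a b\<close> by simp
  next
    case 2
    have "gd edges_nat (node_code (Row a 0)) (node_code (Row a 0)) \<le> ereal (real 0)"
      by (rule gd_le_walk[OF walk_refl])
    also have "\<dots> \<le> ereal (2 * real ell)" by simp
    finally show ?thesis using 2 by simp
  next
    case 3
    then show ?thesis
      using gd_row_upper[of b a] \<open>a \<in> {..<n}\<close> \<open>adj a b\<close> \<open>symp adj\<close> gd_sym
      by (metis lessThan_iff sympD)
  qed
next
  fix f :: "nat \<Rightarrow> real" and a b
  assume "\<forall>a\<in>{..<n}. \<forall>b\<in>{..<n}. adj a b \<longrightarrow> \<bar>f a - f b\<bar> \<le> 1"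
  then show "ereal (real ell * \<bar>f a - f b\<bar>)
      \<le> gd edges_nat (node_code (Row a 0)) (node_code (Row b 0))"
    by (intro gd_row_lower) auto
qed

end

lemma scaled_copy_bij:
  assumes h: "bij_betw h P Q" and copy: "scaled_copy Q adj' \<rho> E emb"
    and adj: "\<And>x y. x \<in> P \<Longrightarrow> y \<in> P \<Longrightarrow> adj x y \<longleftrightarrow> adj' (h x) (h y)"
  shows "scaled_copy P adj \<rho> E (emb \<circ> h)"
  unfolding scaled_copy_def
proof (intro conjI ballI allI impI)
  define g where "g = the_inv_into P h"
  have g: "g (h x) = x" "h x \<in> Q" if "x \<in> P" for x
    using that h unfolding g_def bij_betw_def by (auto simp: the_inv_into_f_f)
  have hg: "g y \<in> P" "h (g y) = y" if "y \<in> Q" for y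
    using that h unfolding g_def bij_betw_def by (auto simp: the_inv_into_into f_the_inv_into_f)
  show "inj_on (emb \<circ> h) P"
    using copy h unfolding scaled_copy_def bij_betw_def by (auto intro: comp_inj_on)
  show "gd E ((emb \<circ> h) x) ((emb \<circ> h) y) \<le> ereal (2 * \<rho>)" if "x \<in> P" "y \<in> P" "adj x y" for x y
    using scaled_copy_upper[OF copy] g adj that by simp
  fix f :: "'a \<Rightarrow> real" and x y
  assume lip: "\<forall>x\<in>P. \<forall>y\<in>P. adj x y \<longrightarrow> \<bar>f x - f y\<bar> \<le> 1" and "x \<in> P" "y \<in> P"
  have "\<bar>(f \<circ> g) a - (f \<circ> g) b\<bar> \<le> 1" if "a \<in> Q" "b \<in> Q" "adj' a b" for a b
    using lip hg adj that by simp
  from scaled_copy_lower[where f = "f \<circ> g", OF copy this g(2)[OF \<open>x \<in> P\<close>] g(2)[OF \<open>y \<in> P\<close>]]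
  show "ereal (\<rho> * \<bar>f x - f y\<bar>) \<le> gd E ((emb \<circ> h) x) ((emb \<circ> h) y)"
    using \<open>x \<in> P\<close> \<open>y \<in> P\<close> by (simp add: g)
qed

text \<open>Enumerate \<open>P\<close> as \<open>{..<card P}\<close> and send each point to the left end of its row in the layout.\<close>
lemma one_planar_scaled_copy:
  fixes P :: "'a set" and adj :: "'a \<Rightarrow> 'a \<Rightarrow> bool"
  assumes "finite P" and "symp adj"
  obtains \<rho> :: real and V :: "nat set" and E :: "nat set set" and emb :: "'a \<Rightarrow> nat"
  where "\<rho> > 0" "finite_graph V E" "one_planar V E" "emb ` P \<subseteq> V" "scaled_copy P adj \<rho> E emb"
proof -
  obtain h where h: "bij_betw h P {..<card P}"
    using ex_bij_betw_finite_nat[OF \<open>finite P\<close>] atLeast0LessThan by auto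
  define adj' where "adj' a b \<longleftrightarrow> adj (the_inv_into P h a) (the_inv_into P h b)" for a b
  have adj: "adj x y \<longleftrightarrow> adj' (h x) (h y)" if "x \<in> P" "y \<in> P" for x y
    using that h unfolding adj'_def bij_betw_def by (simp add: the_inv_into_f_f)
  have "symp adj'" using \<open>symp adj\<close> unfolding adj'_def by (auto intro: sympI dest: sympD)
  obtain ell :: nat where ell: "prime ell" "4 * card P * card P + 2 < ell"
    using bigger_prime by blast
  interpret row_link_layout "card P" adj' ell using ell by unfold_locales
  show thesis
  proof (rule that)
    show "0 < real ell" using ell_pos by simp
    show "finite_graph vertices_nat edges_nat" by (rule finite_graph_nat)
    show "one_planar vertices_nat edges_nat"
      unfolding one_planar_def using one_planar_drawing_nat by blast
    show "((\<lambda>j. node_code (Row j 0)) \<circ> h) ` P \<subseteq> vertices_nat"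
      using h rows_in_vertices_nat unfolding bij_betw_def by auto
    show "scaled_copy P adj (real ell) edges_nat ((\<lambda>j. node_code (Row j 0)) \<circ> h)"
      by (rule scaled_copy_bij[OF h scaled_copy_rows[OF \<open>symp adj'\<close>] adj])
  qed
qed

theorem theorem5p9:
  shows "\<not> (\<exists>k :: int. AN_dim_le finite_one_planar_graphs k)"
proof
  assume "\<exists>k :: int. AN_dim_le finite_one_planar_graphs k"
  then obtain k :: int and c :: real
    where planar: "\<forall>(V, E)\<in>finite_one_planar_graphs. control_function V E k (\<lambda>r. c * r)"
    unfolding AN_dim_le_def by blast
  define D where "D = nat \<lceil>4 * c\<rceil>"
  define d where "d = (nat (k + 1) + 1) * (D + 1)"
  obtain \<rho> and V :: "nat set" and E emb
    where "\<rho> > 0" "finite_graph V E" "one_planar V E" "emb ` grid d (D + 2) \<subseteq> V"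
      and "scaled_copy (grid d (D + 2)) (king_adj d) \<rho> E emb"
    by (rule one_planar_scaled_copy[OF finite_grid[of d "D + 2"] symp_king_adj[of d]])
  moreover have "4 * c \<le> real D" unfolding D_def by (rule real_nat_ceiling_ge)
  ultimately have "\<not> control_function V E k (\<lambda>r. c * r)"
    by (intro not_control_function_if_grid_copy[OF _ _ _ d_def le_refl])
      (auto simp: finite_graph_def)
  moreover have "control_function V E k (\<lambda>r. c * r)"
    using planar \<open>finite_graph V E\<close> \<open>one_planar V E\<close> unfolding finite_one_planar_graphs_def by blast
  ultimately show False by contradiction
qed

end
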